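(* Let $G$ be a group acting on a set $X$ and $f:\mathcal{P}_{\mathrm{fin}}(X)\to\mathbb{R}$ a $G$-invariant submodular function such that the minimum $m=\min_{Y\in\mathcal{P}_{\mathrm{fin}}(X),\,Y\neq\emptyset}f(Y)$ exists. Let $\mathcal{A}$ be the set of atoms for $f$ and $\mathcal{C}(X)=\bigcup_{Y_0\in\mathcal{A}}Y_0$ (the core of $X$). Then: (0) for every atom $Y_0$ and every $g\in G$, $g\cdot Y_0$ is an atom and either $g\cdot Y_0=Y_0$ or $g\cdot Y_0\cap Y_0=\emptyset$; distinct atoms are disjoint; (1) $G$ acts on $\mathcal{A}$ by $(g,Y_0)\mapsto g\cdot Y_0$; (2) $g\cdot\mathcal{C}(X)=\mathcal{C}(X)$ for all $g\in G$, so $\mathcal{C}(X)$, the disjoint union of the atoms, is a disjoint union of $G$-orbits in $X$; (3) for any atom $Y_0$ and any $y_0\in Y_0$ one has $G_{y_0}\subset G_{Y_0}$; and for any $G$-orbit $\mathcal{O}$ and atom $Y_0$, either $\mathcal{O}\cap Y_0=\emptyset$ or, for any $y_0\in\mathcal{O}\cap Y_0$, $\mathcal{O}\cap Y_0=\{g\cdot y_0\mid g\in G_{Y_0}\}$ and the map $gG_{y_0}\mapsto g\cdot y_0$ is a bijection from $G_{Y_0}/G_{y_0}$ onto $\mathcal{O}\cap Y_0$. Furthermore, when the action of $G$ on $X$ is transitive, $\mathcal{C}(X)=X$, i.e. each element of $X$ belongs to an atom (and the atoms partition $X$).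
   Context: $\mathcal{P}_{\mathrm{fin}}(X)$ is the set of finite subsets of $X$. $f$ is submodular if $f(Y\cap Z)+f(Y\cup Z)\leq f(Y)+f(Z)$ for all finite $Y,Z\subset X$, and $G$-invariant if $f(g\cdot Y)=f(Y)$ for all $g\in G$, where $g\cdot Y=\{g\cdot y\mid y\in Y\}$. A fragment for $f$ is a nonempty finite $Y\subset X$ with $f(Y)=m$; an atom is a fragment of minimum cardinality among fragments. $G_{y}=\{g\in G\mid g\cdot y=y\}$ and $G_Y=\{g\in G\mid g\cdot Y=Y\}$. *)

theory Defs
  imports Complex_Main "HOL-Algebra.Group_Action"
begin

definition nefin :: "'b set \<Rightarrow> 'b set set" where
  "nefin E = {Y. finite Y \<and> Y \<noteq> {} \<and> Y \<subseteq> E}"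

definition submodular_on :: "'b set \<Rightarrow> ('b set \<Rightarrow> real) \<Rightarrow> bool" where
  "submodular_on E f \<longleftrightarrow> (\<forall>Y Z. finite Y \<longrightarrow> finite Z \<longrightarrow> Y \<subseteq> E \<longrightarrow> Z \<subseteq> E \<longrightarrow>
      f (Y \<inter> Z) + f (Y \<union> Z) \<le> f Y + f Z)"

definition invariant_under :: "_ \<Rightarrow> 'b set \<Rightarrow> ('a \<Rightarrow> 'b \<Rightarrow> 'b) \<Rightarrow> ('b set \<Rightarrow> real) \<Rightarrow> bool" where
  "invariant_under G E \<phi> f \<longleftrightarrow> (\<forall>g\<in>carrier G. \<forall>Y. finite Y \<longrightarrow> Y \<subseteq> E \<longrightarrow> f (\<phi> g ` Y) = f Y)"

definition min_exists :: "'b set \<Rightarrow> ('b set \<Rightarrow> real) \<Rightarrow> bool" where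
  "min_exists E f \<longleftrightarrow> (\<exists>Y\<in>nefin E. \<forall>Z\<in>nefin E. f Y \<le> f Z)"

definition fragment :: "'b set \<Rightarrow> ('b set \<Rightarrow> real) \<Rightarrow> 'b set \<Rightarrow> bool" where
  "fragment E f Y \<longleftrightarrow> Y \<in> nefin E \<and> (\<forall>Z\<in>nefin E. f Y \<le> f Z)"

definition atom :: "'b set \<Rightarrow> ('b set \<Rightarrow> real) \<Rightarrow> 'b set \<Rightarrow> bool" where
  "atom E f Y \<longleftrightarrow> fragment E f Y \<and> (\<forall>Z. fragment E f Z \<longrightarrow> card Y \<le> card Z)"

definition atoms :: "'b set \<Rightarrow> ('b set \<Rightarrow> real) \<Rightarrow> 'b set set" where
  "atoms E f = {Y. atom E f Y}"

definition core :: "'b set \<Rightarrow> ('b set \<Rightarrow> real) \<Rightarrow> 'b set" where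
  "core E f = \<Union> (atoms E f)"

definition set_stabilizer :: "_ \<Rightarrow> ('a \<Rightarrow> 'b \<Rightarrow> 'b) \<Rightarrow> 'b set \<Rightarrow> 'a set" where
  "set_stabilizer G \<phi> Y = {g \<in> carrier G. \<phi> g ` Y = Y}"

end

theory Submission
  imports Defs
begin

text \<open>Submodularity makes the intersection of two fragments that meet a fragment again, so two
  atoms that meet coincide: both have the minimal cardinality among fragments. Invariance of \<open>f\<close>
  makes \<open>G\<close> permute the atoms, hence the core is \<open>G\<close>-stable, and an element of \<open>G\<close> that moves one
  point of an atom \<open>Y\<^sub>0\<close> into \<open>Y\<^sub>0\<close> fixes \<open>Y\<^sub>0\<close> setwise. The description of an orbit inside \<open>Y\<^sub>0\<close>
  is then the orbit--stabilizer correspondence restricted to the setwise stabilizer of \<open>Y\<^sub>0\<close>; for a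
  transitive action the translates of a single atom already cover everything.\<close>

lemma mem_atoms_iff [simp]: "A \<in> atoms E f \<longleftrightarrow> atom E f A"
  by (simp add: atoms_def)

lemma atom_nefin: "atom E f A \<Longrightarrow> A \<in> nefin E"
  by (simp add: atom_def fragment_def)

lemma fragment_Int:
  assumes sub: "submodular_on E f" and A: "fragment E f A" and B: "fragment E f B"
    and meet: "A \<inter> B \<noteq> {}"
  shows "fragment E f (A \<inter> B)"
proof -
  have A_min: "\<forall>Z\<in>nefin E. f A \<le> f Z" and B_min: "\<forall>Z\<in>nefin E. f B \<le> f Z"
    using A B by (simp_all add: fragment_def)
  have AB: "A \<in> nefin E" "B \<in> nefin E"
    using A B by (simp_all add: fragment_def)
  then have Int: "A \<inter> B \<in> nefin E" and Un: "A \<union> B \<in> nefin E"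
    using meet by (auto simp: nefin_def)
  have "f (A \<inter> B) + f (A \<union> B) \<le> f A + f B"
    using sub AB by (simp add: submodular_on_def nefin_def)
  moreover have "f B \<le> f A" "f A \<le> f (A \<union> B)"
    using A_min B_min AB Un by auto
  ultimately have "f (A \<inter> B) \<le> f A"
    by linarith
  with A_min Int show ?thesis
    by (force simp: fragment_def)
qed

lemma atoms_eq_or_disjoint:
  assumes sub: "submodular_on E f" and A: "atom E f A" and B: "atom E f B"
  shows "A = B \<or> A \<inter> B = {}"
proof (rule disjCI)
  assume "A \<inter> B \<noteq> {}"
  then have "fragment E f (A \<inter> B)"
    using fragment_Int[OF sub] A B by (simp add: atom_def)
  then have "card A \<le> card (A \<inter> B)" "card B \<le> card (A \<inter> B)"
    using A B by (simp_all add: atom_def)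
  moreover have "finite A" "finite B"
    using atom_nefin[OF A] atom_nefin[OF B] by (simp_all add: nefin_def)
  ultimately have "A \<inter> B = A" "A \<inter> B = B"
    by (metis Int_lower1 Int_lower2 card_seteq)+
  then show "A = B"
    by simp
qed

lemma atom_exists:
  assumes "min_exists E f"
  shows "\<exists>A. atom E f A"
proof -
  obtain Y where "fragment E f Y"
    using assms by (auto simp: min_exists_def fragment_def)
  then show ?thesis
    using ex_has_least_nat[of "fragment E f" Y card] by (auto simp: atom_def)
qed

lemma core_subset: "core E f \<subseteq> E"
  by (auto simp: core_def atom_def fragment_def nefin_def)

lemma ex1_atom_if_mem_core:
  assumes "submodular_on E f" and "x \<in> core E f"
  shows "\<exists>!A. A \<in> atoms E f \<and> x \<in> A"
  using assms atoms_eq_or_disjoint[OF assms(1)] unfolding core_def by auto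

context group_action
begin

lemma image_inv_image:
  assumes "g \<in> carrier G" and "Y \<subseteq> E"
  shows "\<phi> (inv g) ` \<phi> g ` Y = Y"
  using orbit_sym_aux[OF assms(1)] assms(2) by (force simp: image_image)

lemma image_mult:
  assumes "g \<in> carrier G" and "h \<in> carrier G" and "Y \<subseteq> E"
  shows "\<phi> (g \<otimes> h) ` Y = \<phi> g ` \<phi> h ` Y"
  using composition_rule[OF _ assms(1,2)] assms(3) by (force simp: image_image)

lemma set_image_action:
  assumes dom: "\<Union>\<F> \<subseteq> E" and closed: "\<And>g Y. g \<in> carrier G \<Longrightarrow> Y \<in> \<F> \<Longrightarrow> \<phi> g ` Y \<in> \<F>"
  shows "group_action G \<F> (\<lambda>g. \<lambda>Y\<in>\<F>. \<phi> g ` Y)"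
proof -
  interpret group G
    using group_hom by (rule group_hom.axioms(1))
  have bij: "bij_betw (\<lambda>Y. \<phi> g ` Y) \<F> \<F>" if g: "g \<in> carrier G" for g
  proof (rule bij_betw_byWitness[where f' = "\<lambda>Y. \<phi> (inv g) ` Y"])
    show "\<forall>Y\<in>\<F>. \<phi> (inv g) ` \<phi> g ` Y = Y"
      using image_inv_image[OF g] dom by blast
    show "\<forall>Y\<in>\<F>. \<phi> g ` \<phi> (inv g) ` Y = Y"
      using image_inv_image[OF inv_closed[OF g]] dom g by (simp add: Sup_le_iff)
  qed (use closed g in auto)
  have "(\<lambda>g. \<lambda>Y\<in>\<F>. \<phi> g ` Y) \<in> hom G (BijGroup \<F>)"
  proof (rule homI)
    show "(\<lambda>Y\<in>\<F>. \<phi> g ` Y) \<in> carrier (BijGroup \<F>)" if "g \<in> carrier G" for g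
      using bij[OF that] by (simp add: BijGroup_def Bij_def bij_betw_restrict_eq)
    show "(\<lambda>Y\<in>\<F>. \<phi> (g \<otimes> h) ` Y) =
        (\<lambda>Y\<in>\<F>. \<phi> g ` Y) \<otimes>\<^bsub>BijGroup \<F>\<^esub> (\<lambda>Y\<in>\<F>. \<phi> h ` Y)"
      if g: "g \<in> carrier G" and h: "h \<in> carrier G" for g h
    proof -
      have "(\<lambda>Y\<in>\<F>. \<phi> (g \<otimes> h) ` Y) = (\<lambda>Y\<in>\<F>. \<phi> g ` \<phi> h ` Y)"
        using image_mult[OF g h] dom by (intro restrict_ext) blast
      then show ?thesis
        using bij[OF g] bij[OF h] closed[OF h]
        by (simp add: BijGroup_def Bij_def bij_betw_restrict_eq compose_def cong: restrict_cong)
    qed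
  qed
  then show ?thesis
    by (simp add: group_action_def group_hom_def group_hom_axioms_def group_BijGroup is_group)
qed

lemma orbit_eq_if_mem:
  assumes "Orb \<in> orbits G E \<phi>" and "y \<in> Orb"
  shows "Orb = orbit G \<phi> y"
proof -
  have "y \<in> E"
    using assms orbits_coverture by blast
  then have "orbit G \<phi> y \<in> orbits G E \<phi>" and "y \<in> orbit G \<phi> y"
    by (auto simp: orbits_def orbit_refl)
  then show ?thesis
    using disjoint_union[OF assms(1)] assms(2) by blast
qed

lemma invariant_subset_eq_Union_orbits:
  assumes "S \<subseteq> E" and "\<And>g. g \<in> carrier G \<Longrightarrow> \<phi> g ` S \<subseteq> S"
  shows "S = \<Union> {Orb \<in> orbits G E \<phi>. Orb \<subseteq> S}"
proof (intro equalityI subsetI)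
  fix x assume "x \<in> S"
  then have "x \<in> E"
    using assms(1) by blast
  then have "orbit G \<phi> x \<in> orbits G E \<phi>" and "x \<in> orbit G \<phi> x"
    by (auto simp: orbits_def orbit_refl)
  moreover have "orbit G \<phi> x \<subseteq> S"
    using assms(2) \<open>x \<in> S\<close> by (auto simp: orbit_def)
  ultimately show "x \<in> \<Union> {Orb \<in> orbits G E \<phi>. Orb \<subseteq> S}"
    by blast
qed auto

lemma l_coset_stabilizer_eq:
  assumes g: "g \<in> carrier G" and y: "y \<in> E"
  shows "g <# stabilizer G \<phi> y = {k \<in> carrier G. \<phi> k y = \<phi> g y}"
proof -
  interpret group G
    using group_hom by (rule group_hom.axioms(1))
  show ?thesis
  proof
    show "g <# stabilizer G \<phi> y \<subseteq> {k \<in> carrier G. \<phi> k y = \<phi> g y}"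
      using composition_rule[OF y g] g by (auto simp: l_coset_def stabilizer_def)
    show "{k \<in> carrier G. \<phi> k y = \<phi> g y} \<subseteq> g <# stabilizer G \<phi> y"
    proof
      fix k assume "k \<in> {k \<in> carrier G. \<phi> k y = \<phi> g y}"
      then have k: "k \<in> carrier G" and same: "\<phi> k y = \<phi> g y"
        by auto
      have "\<phi> (inv g \<otimes> k) y = \<phi> (inv g) (\<phi> g y)"
        using composition_rule[OF y _ k] g same by simp
      also have "\<dots> = y"
        using orbit_sym_aux[OF g y] by simp
      finally have "inv g \<otimes> k \<in> stabilizer G \<phi> y"
        using g k by (simp add: stabilizer_def)
      moreover have "k = g \<otimes> (inv g \<otimes> k)"
        using g k by (simp add: m_assoc[symmetric])
      ultimately show "k \<in> g <# stabilizer G \<phi> y"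
        unfolding l_coset_def by blast
    qed
  qed
qed

lemma the_elem_image_l_coset_stabilizer:
  assumes "g \<in> carrier G" and "y \<in> E"
  shows "the_elem ((\<lambda>k. \<phi> k y) ` (g <# stabilizer G \<phi> y)) = \<phi> g y"
proof -
  have "(\<lambda>k. \<phi> k y) ` (g <# stabilizer G \<phi> y) = {\<phi> g y}"
    using l_coset_stabilizer_eq[OF assms] assms(1) by auto
  then show ?thesis
    by simp
qed

lemma bij_betw_l_cosets_stabilizer:
  assumes y: "y \<in> E" and H: "H \<subseteq> carrier G"
  shows "bij_betw (\<lambda>C. the_elem ((\<lambda>g. \<phi> g y) ` C))
           {g <# stabilizer G \<phi> y | g. g \<in> H} {\<phi> g y | g. g \<in> H}"
proof -
  let ?eval = "\<lambda>C. the_elem ((\<lambda>g. \<phi> g y) ` C)"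
  have eval_coset: "?eval (g <# stabilizer G \<phi> y) = \<phi> g y" if "g \<in> H" for g
    using the_elem_image_l_coset_stabilizer[OF _ y] H that by blast
  have "inj_on ?eval {g <# stabilizer G \<phi> y | g. g \<in> H}"
  proof (rule inj_onI, clarify)
    fix g1 g2 assume g1: "g1 \<in> H" and g2: "g2 \<in> H"
      and "?eval (g1 <# stabilizer G \<phi> y) = ?eval (g2 <# stabilizer G \<phi> y)"
    then have "\<phi> g1 y = \<phi> g2 y"
      by (simp add: eval_coset)
    then show "g1 <# stabilizer G \<phi> y = g2 <# stabilizer G \<phi> y"
      using l_coset_stabilizer_eq[OF _ y] H g1 g2 by (simp add: subsetD)
  qed
  moreover have "?eval ` {g <# stabilizer G \<phi> y | g. g \<in> H} = {\<phi> g y | g. g \<in> H}"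
    unfolding Setcompr_eq_image image_image using eval_coset by (simp cong: image_cong)
  ultimately show ?thesis
    by (simp add: bij_betw_def)
qed

lemma atom_image:
  assumes inv: "invariant_under G E \<phi> f" and g: "g \<in> carrier G" and A: "atom E f A"
  shows "atom E f (\<phi> g ` A)"
proof -
  have A_nefin: "A \<in> nefin E"
    using A by (rule atom_nefin)
  then have "\<phi> g ` A \<in> nefin E" and "card (\<phi> g ` A) = card A"
    using surj_prop[OF g] inj_on_subset[OF inj_prop[OF g]]
    by (auto simp: nefin_def card_image)
  moreover have "f (\<phi> g ` A) = f A"
    using inv g A_nefin by (simp add: invariant_under_def nefin_def)
  ultimately show ?thesis
    using A by (simp add: atom_def fragment_def)
qed

lemma set_stabilizer_atomI:
  assumes sub: "submodular_on E f" and inv: "invariant_under G E \<phi> f"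
    and g: "g \<in> carrier G" and A: "atom E f A" and "y \<in> A" and "\<phi> g y \<in> A"
  shows "g \<in> set_stabilizer G \<phi> A"
proof -
  have "\<phi> g y \<in> \<phi> g ` A \<inter> A"
    using assms(5,6) by blast
  then have "\<phi> g ` A = A"
    using atoms_eq_or_disjoint[OF sub atom_image[OF inv g A] A] by blast
  then show ?thesis
    using g by (simp add: set_stabilizer_def)
qed

lemma atoms_action:
  assumes "invariant_under G E \<phi> f"
  shows "group_action G (atoms E f) (\<lambda>g. \<lambda>Y\<in>atoms E f. \<phi> g ` Y)"
  by (rule set_image_action) (simp_all add: core_subset[unfolded core_def] atom_image[OF assms])

lemma core_image:
  assumes "invariant_under G E \<phi> f" and "g \<in> carrier G"
  shows "\<phi> g ` core E f = core E f"
proof -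
  have "(\<lambda>Y. \<phi> g ` Y) ` atoms E f = atoms E f"
    using group_action.surj_prop[OF atoms_action[OF assms(1)] assms(2)] by simp
  then show ?thesis
    by (simp add: core_def image_Union)
qed

lemma orbit_Int_atom:
  assumes sub: "submodular_on E f" and inv: "invariant_under G E \<phi> f"
    and Orb: "Orb \<in> orbits G E \<phi>" and A: "atom E f A" and y: "y \<in> Orb \<inter> A"
  shows "Orb \<inter> A = {\<phi> g y | g. g \<in> set_stabilizer G \<phi> A}"
proof -
  have Orb_eq: "Orb = orbit G \<phi> y"
    using orbit_eq_if_mem[OF Orb] y by blast
  show ?thesis
  proof (intro equalityI subsetI)
    fix z assume z: "z \<in> Orb \<inter> A"
    then obtain g where g: "g \<in> carrier G" and z_eq: "z = \<phi> g y"
      by (auto simp: Orb_eq orbit_def)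
    then have "g \<in> set_stabilizer G \<phi> A"
      using set_stabilizer_atomI[OF sub inv g A] y z by blast
    then show "z \<in> {\<phi> g y | g. g \<in> set_stabilizer G \<phi> A}"
      using z_eq by blast
  next
    fix z assume "z \<in> {\<phi> g y | g. g \<in> set_stabilizer G \<phi> A}"
    then obtain g where "g \<in> carrier G" and "\<phi> g ` A = A" and "z = \<phi> g y"
      by (auto simp: set_stabilizer_def)
    then show "z \<in> Orb \<inter> A"
      using y unfolding Orb_eq orbit_def by blast
  qed
qed

lemma bij_betw_l_cosets_orbit_Int_atom:
  assumes sub: "submodular_on E f" and inv: "invariant_under G E \<phi> f"
    and Orb: "Orb \<in> orbits G E \<phi>" and A: "atom E f A" and y: "y \<in> Orb \<inter> A"
  shows "bij_betw (\<lambda>C. the_elem ((\<lambda>g. \<phi> g y) ` C))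
           {g <# stabilizer G \<phi> y | g. g \<in> set_stabilizer G \<phi> A} (Orb \<inter> A)"
proof -
  have "y \<in> E" and "set_stabilizer G \<phi> A \<subseteq> carrier G"
    using atom_nefin[OF A] y by (auto simp: nefin_def set_stabilizer_def)
  then show ?thesis
    unfolding orbit_Int_atom[OF assms] by (rule bij_betw_l_cosets_stabilizer)
qed

end

lemma (in transitive_action) core_eq:
  assumes inv: "invariant_under G E \<phi> f" and mn: "min_exists E f"
  shows "core E f = E"
proof -
  obtain A where A: "atom E f A"
    using atom_exists[OF mn] by blast
  then obtain a where a: "a \<in> A"
    using atom_nefin by (force simp: nefin_def)
  have "x \<in> core E f" if x: "x \<in> E" for x
  proof -
    obtain g where g: "g \<in> carrier G" and "\<phi> g a = x"
      using unique_orbit[OF _ x] a atom_nefin[OF A] by (auto simp: nefin_def)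
    then have "x \<in> \<phi> g ` A"
      using a by blast
    then show ?thesis
      using atom_image[OF inv g A] by (auto simp: core_def)
  qed
  then have "E \<subseteq> core E f"
    by (rule subsetI)
  with core_subset show ?thesis
    by (rule subset_antisym)
qed

theorem mainTheorem7:
  fixes G (structure) and E :: "'b set" and \<phi> :: "'a \<Rightarrow> 'b \<Rightarrow> 'b" and f :: "'b set \<Rightarrow> real"
  assumes act: "group_action G E \<phi>"
    and sub: "submodular_on E f"
    and inv: "invariant_under G E \<phi> f"
    and mn: "min_exists E f"
  shows
    "(\<forall>Y0\<in>atoms E f. \<forall>g\<in>carrier G.
        atom E f (\<phi> g ` Y0) \<and> (\<phi> g ` Y0 = Y0 \<or> \<phi> g ` Y0 \<inter> Y0 = {}))
     \<and> (\<forall>A\<in>atoms E f. \<forall>B\<in>atoms E f. A \<noteq> B \<longrightarrow> A \<inter> B = {})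
     \<and> group_action G (atoms E f) (\<lambda>g. \<lambda>Y\<in>atoms E f. \<phi> g ` Y)
     \<and> (\<forall>g\<in>carrier G. \<phi> g ` core E f = core E f)
     \<and> core E f = \<Union> {Orb \<in> orbits G E \<phi>. Orb \<subseteq> core E f}
     \<and> (\<forall>Y0\<in>atoms E f. \<forall>y0\<in>Y0. stabilizer G \<phi> y0 \<subseteq> set_stabilizer G \<phi> Y0)
     \<and> (\<forall>Orb\<in>orbits G E \<phi>. \<forall>Y0\<in>atoms E f.
          Orb \<inter> Y0 = {} \<or>
          (\<forall>y0\<in>Orb \<inter> Y0.
             Orb \<inter> Y0 = {\<phi> g y0 | g. g \<in> set_stabilizer G \<phi> Y0} \<and>
             bij_betw (\<lambda>C. the_elem ((\<lambda>g. \<phi> g y0) ` C))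
               {g <# stabilizer G \<phi> y0 | g. g \<in> set_stabilizer G \<phi> Y0} (Orb \<inter> Y0)))
     \<and> ((\<forall>x\<in>E. \<forall>y\<in>E. \<exists>g\<in>carrier G. \<phi> g x = y) \<longrightarrow>
          core E f = E \<and> (\<forall>x\<in>E. \<exists>!A. A \<in> atoms E f \<and> x \<in> A))"
proof -
  interpret group_action G E \<phi>
    by (rule act)
  have "\<forall>Y\<in>atoms E f. \<forall>g\<in>carrier G. atom E f (\<phi> g ` Y) \<and> (\<phi> g ` Y = Y \<or> \<phi> g ` Y \<inter> Y = {})"
    using atom_image[OF inv] atoms_eq_or_disjoint[OF sub] by simp
  moreover have "\<forall>A\<in>atoms E f. \<forall>B\<in>atoms E f. A \<noteq> B \<longrightarrow> A \<inter> B = {}"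
    using atoms_eq_or_disjoint[OF sub, folded mem_atoms_iff] by blast
  moreover have "\<forall>Y\<in>atoms E f. \<forall>y\<in>Y. stabilizer G \<phi> y \<subseteq> set_stabilizer G \<phi> Y"
    using set_stabilizer_atomI[OF sub inv] by (auto simp: stabilizer_def)
  moreover have "core E f = E" if "\<forall>x\<in>E. \<forall>y\<in>E. \<exists>g\<in>carrier G. \<phi> g x = y"
    using transitive_action.core_eq[OF _ inv mn] act that
    by (simp add: transitive_action_def transitive_action_axioms_def)
  ultimately show ?thesis
    using atoms_action[OF inv] core_image[OF inv] ex1_atom_if_mem_core[OF sub]
      orbit_Int_atom[OF sub inv] bij_betw_l_cosets_orbit_Int_atom[OF sub inv]
      invariant_subset_eq_Union_orbits[OF core_subset core_image[OF inv, THEN equalityD1]]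
    by simp
qed

end
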